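(* Let $x_1,\dots,x_n\in\mathbb R^p$ be fixed, $T\subseteq[p]$ with $|T|=t$, and $\epsilon_1,\dots,\epsilon_n$ i.i.d. $N(0,1)$. Let $k\in\{2,3\}$ and set $\hat\Sigma_T^{(k)}=\frac1n\sum_{i=1}^n x_{i,T}^{\otimes k}$ and $G^{(k)}=\sum_{i=1}^n\epsilon_i^2x_{i,T}^{\otimes k}$. Then there is a constant $\xi$ depending only on $k$ such that for every $\delta\in(0,1)$, with probability at least $1-\delta$, $$\Lambda_{\max}\Big(\frac1n G^{(k)}-\hat\Sigma_T^{(k)}\Big)\le\frac2n\Big(\sqrt{t\,n\,\Lambda_{\max}(\hat\Sigma_T^{(2k)})\log(\xi/\delta)}+t\max_{i\in[n]}\|x_{i,T}\|^k\log(\xi/\delta)\Big).$$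
   Context: For a symmetric tensor of the form $A=\sum_i c_i a_i^{\otimes k}$ on $\mathbb R^T$ and $z\in\mathbb R^T$, write $A(z)=\sum_i c_i(a_i^\top z)^k$, and $\Lambda_{\max}(A)=\sup_{\|z\|_2=1}A(z)$. In particular $\Lambda_{\max}(\hat\Sigma^{(2k)}_T)=\sup_{\|z\|=1}\frac1n\sum_i(x_{i,T}^\top z)^{2k}$. $x_{i,T}$ is the subvector of $x_i$ indexed by $T$. (In the paper $G^{(k)}$ arises as the $k$-th derivative tensor at $\theta^\star_T$ of the Gaussian negative log-likelihood $\sum_i x_{i,T}^\top\theta+\eta_i^2e^{-x_{i,T}^\top\theta}$ with $\eta_i=e^{x_i^\top\theta^\star/2}\epsilon_i$.) *)

theory Defs
  imports "HOL-Probability.Probability"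
begin

text \<open>Vectors x_i in R^p are represented as x i :: nat => real (coordinates j < p);
  a direction z supported on the coordinate set T is a function nat => real,
  only its values on T matter.\<close>

definition ip_T :: "nat set \<Rightarrow> (nat \<Rightarrow> real) \<Rightarrow> (nat \<Rightarrow> real) \<Rightarrow> real" where
  "ip_T T a z = (\<Sum>j\<in>T. a j * z j)"

definition norm_T :: "nat set \<Rightarrow> (nat \<Rightarrow> real) \<Rightarrow> real" where
  "norm_T T a = sqrt (\<Sum>j\<in>T. (a j)\<^sup>2)"

definition unit_sphere_T :: "nat set \<Rightarrow> (nat \<Rightarrow> real) set" where
  "unit_sphere_T T = {z. norm_T T z = 1}"

text \<open>Lambda_max of a symmetric tensor given through its form A(z), over unit z in R^T.\<close>
definition Lambda_max :: "nat set \<Rightarrow> ((nat \<Rightarrow> real) \<Rightarrow> real) \<Rightarrow> real" where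
  "Lambda_max T A = (SUP z \<in> unit_sphere_T T. A z)"

text \<open>i.i.d. N(0,1) noise epsilon_1..epsilon_n realised canonically: omega i = epsilon_i.\<close>
definition gauss_measure :: "nat \<Rightarrow> (nat \<Rightarrow> real) measure" where
  "gauss_measure n = PiM {..<n} (\<lambda>_. density lborel std_normal_density)"

end

theory Submission
  imports Defs
begin

text \<open>The deviation \<open>G\<^sup>(\<^sup>k\<^sup>)/n - \<Sigma>\<^sup>(\<^sup>k\<^sup>)\<close> is the rank-one tensor with weights
  \<open>(\<epsilon>\<^sub>i\<^sup>2 - 1)/n\<close>. In a fixed unit direction \<open>y\<close> its form is a weighted sum of centred \<open>\<chi>\<^sup>2\<close>
  variables with weights \<open>(x\<^sub>i\<^sup>Ty)\<^sup>k\<close>, whose squares sum to at most \<open>n \<Lambda>\<^sub>m\<^sub>a\<^sub>x(\<Sigma>\<^sup>(\<^sup>2\<^sup>k\<^sup>))\<close> and which are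
  bounded by \<open>max \<parallel>x\<^sub>i\<parallel>\<^sup>k\<close>; the \<open>\<chi>\<^sup>2\<close> moment generating function gives the Laurent--Massart
  tail bound in that direction. By polarization, a form of degree 2 or 3 is Lipschitz on the
  sphere with constant a multiple of its spectral norm, so a net of size \<open>C\<^sup>t\<close> controls the
  supremum up to a factor \<open>4/3\<close>, and a union bound over the net gives the claim with
  \<open>\<xi> = 2C\<^sup>2\<close>. For \<open>t = 1\<close> the sphere is \<open>{\<plusminus>1}\<close> and serves as an exact net.\<close>

section \<open>Tails of weighted chi-square sums\<close>

lemma std_normal_chi2_mgf:
  fixes \<theta> :: real
  assumes "2 * \<theta> < 1"
  shows "(\<integral>\<^sup>+ x. ennreal (exp (\<theta> * (x\<^sup>2 - 1))) \<partial>density lborel std_normal_density)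
     = ennreal (exp (-\<theta>) / sqrt (1 - 2 * \<theta>))"
proof -
  define s where "s = 1 / sqrt (1 - 2 * \<theta>)"
  define c where "c = exp (-\<theta>) / sqrt (1 - 2 * \<theta>)"
  have q: "0 < sqrt (1 - 2 * \<theta>)" using assms by simp
  have s: "0 < s" "s\<^sup>2 = 1 / (1 - 2 * \<theta>)" using assms by (simp_all add: s_def power_divide)
  have c: "0 \<le> c" using q by (simp add: c_def)
  have density: "std_normal_density x * exp (\<theta> * (x\<^sup>2 - 1)) = c * normal_density 0 s x" for x
  proof -
    have "normal_density 0 s x = sqrt (1 - 2 * \<theta>) / sqrt (2 * pi) * exp (- (1 - 2 * \<theta>) * x\<^sup>2 / 2)"
      unfolding normal_density_def s(2) using assms q
      by (simp add: real_sqrt_divide real_sqrt_mult field_simps)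
    moreover have "exp (- x\<^sup>2 / 2) * exp (\<theta> * (x\<^sup>2 - 1)) = exp (-\<theta>) * exp (- (1 - 2 * \<theta>) * x\<^sup>2 / 2)"
      by (simp add: exp_add[symmetric] field_simps)
    ultimately show ?thesis
      unfolding std_normal_density_def c_def using q by (simp add: field_simps)
  qed
  have "(\<integral>\<^sup>+ x. ennreal (exp (\<theta> * (x\<^sup>2 - 1))) \<partial>density lborel std_normal_density)
      = (\<integral>\<^sup>+ x. ennreal c * ennreal (normal_density 0 s x) \<partial>lborel)"
    by (subst nn_integral_density)
       (auto intro!: nn_integral_cong simp: ennreal_mult'[symmetric] density[symmetric] c)
  also have "\<dots> = ennreal c * (\<integral>\<^sup>+ x. ennreal (normal_density 0 s x) \<partial>lborel)"
    by (rule nn_integral_cmult) auto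
  also have "(\<integral>\<^sup>+ x. ennreal (normal_density 0 s x) \<partial>lborel) = 1"
    using s(1) by (subst nn_integral_eq_integral) (auto simp: integral_normal_density integrable_normal_density)
  finally show ?thesis by (simp add: c_def)
qed

lemma std_normal_chi2_mgf_le:
  fixes \<theta> b :: real
  assumes "2 * \<bar>\<theta>\<bar> \<le> b" "b < 1"
  shows "exp (-\<theta>) / sqrt (1 - 2 * \<theta>) \<le> exp (\<theta>\<^sup>2 / (1 - b))"
proof -
  define \<kappa> where "\<kappa> = 1 / (1 - b)"
  define g where "g s = s\<^sup>2 * \<kappa> + s + ln (1 - 2 * s) / 2" for s :: real
  have deriv: "DERIV g s :> 2 * s * (\<kappa> - 1 / (1 - 2 * s))" if "2 * s < 1" for s
    unfolding g_def using that by (auto intro!: derivative_eq_intros simp: field_simps)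
  have \<kappa>: "1 / (1 - 2 * s) \<le> \<kappa>" if "2 * s \<le> b" for s
    unfolding \<kappa>_def using that assms by (intro divide_left_mono) auto
  \<comment> \<open>\<open>g\<close> decreases on \<open>[-b/2, 0]\<close> and increases on \<open>[0, b/2]\<close>\<close>
  have "g 0 \<le> g \<theta>"
  proof (cases "0 \<le> \<theta>")
    case True
    show ?thesis
    proof (rule DERIV_nonneg_imp_nondecreasing[OF True])
      fix s assume "0 \<le> s" "s \<le> \<theta>"
      then show "\<exists>y. DERIV g s :> y \<and> 0 \<le> y"
        using deriv[of s] \<kappa>[of s] assms by (intro exI[of _ "2 * s * (\<kappa> - 1 / (1 - 2 * s))"]) auto
    qed
  next
    case False
    show ?thesis
    proof (rule DERIV_nonpos_imp_nonincreasing[of \<theta> 0])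
      show "\<theta> \<le> 0" using False by simp
    next
      fix s assume "\<theta> \<le> s" "s \<le> 0"
      then show "\<exists>y. DERIV g s :> y \<and> y \<le> 0"
        using deriv[of s] \<kappa>[of s] assms
        by (intro exI[of _ "2 * s * (\<kappa> - 1 / (1 - 2 * s))"]) (auto intro!: mult_nonpos_nonneg)
    qed
  qed
  moreover have "sqrt (1 - 2 * \<theta>) = exp (ln (1 - 2 * \<theta>) / 2)"
    using assms by (simp add: sqrt_def root_powr_inverse powr_def)
  ultimately show ?thesis
    by (simp add: g_def \<kappa>_def exp_diff[symmetric])
qed

lemma prob_space_gauss_measure: "prob_space (gauss_measure n)"
  unfolding gauss_measure_def by (intro prob_space_PiM prob_space_normal_density) simp

lemma measurable_gauss_component[measurable]:
  "i \<in> {..<n} \<Longrightarrow> (\<lambda>\<omega>. \<omega> i) \<in> borel_measurable (gauss_measure n)"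
  unfolding gauss_measure_def by (simp cong: measurable_cong_sets)

lemma gauss_weighted_chi2_chernoff:
  fixes a :: "nat \<Rightarrow> real" and \<mu> c x :: real
  assumes "0 \<le> \<mu>" "2 * \<mu> * c < 1" "\<And>i. i < n \<Longrightarrow> \<bar>a i\<bar> \<le> c"
  shows "emeasure (gauss_measure n) {\<omega> \<in> space (gauss_measure n). x < (\<Sum>i<n. a i * ((\<omega> i)\<^sup>2 - 1))}
     \<le> ennreal (exp (- \<mu> * x + \<mu>\<^sup>2 * (\<Sum>i<n. (a i)\<^sup>2) / (1 - 2 * \<mu> * c)))"
proof -
  define D where "D = density lborel std_normal_density"
  interpret D: product_prob_space "\<lambda>_::nat. D"
    by (intro product_prob_spaceI) (simp add: D_def prob_space_normal_density)
  define X where "X \<omega> = (\<Sum>i<n. a i * ((\<omega> i)\<^sup>2 - 1))" for \<omega> :: "nat \<Rightarrow> real"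
  define E where "E = {\<omega> \<in> space (gauss_measure n). x < X \<omega>}"
  have factor: "\<bar>\<mu> * a i\<bar> \<le> \<mu> * c" if "i < n" for i
    using assms(1) mult_left_mono[OF assms(3)[OF that] assms(1)] by (simp add: abs_mult)
  have "E \<in> sets (gauss_measure n)" unfolding E_def X_def by measurable
  then have "emeasure (gauss_measure n) E = (\<integral>\<^sup>+ \<omega>. indicator E \<omega> \<partial>gauss_measure n)"
    by simp
  \<comment> \<open>Markov's inequality for \<open>exp (\<mu> * (X - x))\<close>\<close>
  also have "\<dots> \<le> (\<integral>\<^sup>+ \<omega>. ennreal (exp (\<mu> * (X \<omega> - x))) \<partial>gauss_measure n)"
    using assms(1) by (intro nn_integral_mono) (auto simp: E_def indicator_def)
  also have "\<dots> = ennreal (exp (- \<mu> * x)) *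
      (\<integral>\<^sup>+ \<omega>. (\<Prod>i<n. ennreal (exp ((\<mu> * a i) * ((\<omega> i)\<^sup>2 - 1)))) \<partial>gauss_measure n)"
    by (subst nn_integral_cmult[symmetric])
       (auto intro!: nn_integral_cong simp: X_def prod_ennreal ennreal_mult'[symmetric]
         exp_sum[symmetric] exp_add[symmetric] sum_distrib_left algebra_simps)
  \<comment> \<open>independence of the coordinates\<close>
  also have "(\<integral>\<^sup>+ \<omega>. (\<Prod>i<n. ennreal (exp ((\<mu> * a i) * ((\<omega> i)\<^sup>2 - 1)))) \<partial>gauss_measure n)
      = (\<Prod>i<n. ennreal (exp (- (\<mu> * a i)) / sqrt (1 - 2 * (\<mu> * a i))))"
  proof -
    have "2 * (\<mu> * a i) < 1" if "i < n" for i
      using factor[OF that] assms(2) by linarith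
    then show ?thesis
      unfolding gauss_measure_def D_def[symmetric]
      using D.product_nn_integral_prod[of "{..<n}" "\<lambda>i y. ennreal (exp ((\<mu> * a i) * (y\<^sup>2 - 1)))"]
      by (simp add: D_def std_normal_chi2_mgf)
  qed
  also have "\<dots> \<le> (\<Prod>i<n. ennreal (exp ((\<mu> * a i)\<^sup>2 / (1 - 2 * \<mu> * c))))"
    using factor assms(2)
    by (intro prod_mono_ennreal ennreal_leI std_normal_chi2_mgf_le) (auto simp: mult.assoc)
  also have "\<dots> = ennreal (exp (\<Sum>i<n. (\<mu> * a i)\<^sup>2 / (1 - 2 * \<mu> * c)))"
    by (simp add: prod_ennreal exp_sum)
  finally have "emeasure (gauss_measure n) E
      \<le> ennreal (exp (- \<mu> * x)) * ennreal (exp (\<Sum>i<n. (\<mu> * a i)\<^sup>2 / (1 - 2 * \<mu> * c)))"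
    by (simp add: mult_left_mono)
  also have "\<dots> = ennreal (exp (- \<mu> * x + \<mu>\<^sup>2 * (\<Sum>i<n. (a i)\<^sup>2) / (1 - 2 * \<mu> * c)))"
    by (simp add: ennreal_mult'[symmetric] exp_add[symmetric] sum_divide_distrib[symmetric]
        sum_distrib_left power_mult_distrib)
  finally show ?thesis unfolding E_def X_def .
qed

text \<open>The Laurent--Massart bound, obtained from the Chernoff bound with
  \<open>\<mu> = \<surd>u / (\<surd>V + 2 c \<surd>u)\<close>.\<close>

lemma gauss_weighted_chi2_tail:
  fixes a :: "nat \<Rightarrow> real" and V c u :: real
  assumes "(\<Sum>i<n. (a i)\<^sup>2) \<le> V" "\<And>i. i < n \<Longrightarrow> \<bar>a i\<bar> \<le> c" "0 \<le> c" "0 < u"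
  shows "measure (gauss_measure n) {\<omega> \<in> space (gauss_measure n).
            2 * sqrt (V * u) + 2 * c * u < (\<Sum>i<n. a i * ((\<omega> i)\<^sup>2 - 1))} \<le> exp (- u)"
proof -
  interpret prob_space "gauss_measure n" by (rule prob_space_gauss_measure)
  let ?x = "2 * sqrt (V * u) + 2 * c * u"
  let ?E = "{\<omega> \<in> space (gauss_measure n). ?x < (\<Sum>i<n. a i * ((\<omega> i)\<^sup>2 - 1))}"
  have sum_nonneg: "0 \<le> (\<Sum>i<n. (a i)\<^sup>2)" by (intro sum_nonneg) auto
  show ?thesis
  proof (cases "V \<le> 0")
    case True
    then have "(\<Sum>i<n. (a i)\<^sup>2) = 0" using assms(1) sum_nonneg by linarith
    then have "a i = 0" if "i < n" for i using that by (simp add: sum_nonneg_eq_0_iff)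
    moreover have "0 \<le> ?x" using assms(1,3,4) True sum_nonneg by auto
    ultimately have "?E = {}" by auto
    then show ?thesis by (simp only:) simp
  next
    case False
    define q where "q = sqrt V"
    define r where "r = sqrt u"
    define D where "D = q + 2 * c * r"
    define \<mu> where "\<mu> = r / D"
    have qr: "0 < q" "0 < r" "V = q\<^sup>2" "u = r\<^sup>2" using False assms(4) by (auto simp: q_def r_def)
    then have "0 < D" using assms(3) by (simp add: D_def add_pos_nonneg)
    then have \<mu>: "0 \<le> \<mu>" "1 - 2 * \<mu> * c = q / D" "2 * \<mu> * c < 1"
      using qr by (auto simp: \<mu>_def D_def field_simps)
    have "emeasure (gauss_measure n) ?E
        \<le> ennreal (exp (- \<mu> * ?x + \<mu>\<^sup>2 * (\<Sum>i<n. (a i)\<^sup>2) / (1 - 2 * \<mu> * c)))"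
      by (rule gauss_weighted_chi2_chernoff[OF \<mu>(1,3) assms(2)])
    also have "\<dots> \<le> ennreal (exp (- \<mu> * ?x + \<mu>\<^sup>2 * V / (1 - 2 * \<mu> * c)))"
      using assms(1) \<mu>(3) by (auto intro!: divide_right_mono mult_left_mono)
    also have "- \<mu> * ?x + \<mu>\<^sup>2 * V / (1 - 2 * \<mu> * c) = - u"
    proof -
      have "D \<noteq> 0" "q \<noteq> 0" using \<open>0 < D\<close> qr by auto
      moreover have "?x = 2 * (q * r) + 2 * c * r\<^sup>2" using qr by (simp add: real_sqrt_mult)
      ultimately show ?thesis unfolding \<mu>(2) \<mu>_def qr(3,4)
        by (simp add: divide_simps power2_eq_square) (simp add: D_def algebra_simps)
    qed
    finally show ?thesis by (simp add: emeasure_eq_measure)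
  qed
qed

lemma gauss_weighted_chi2_abs_tail:
  fixes a :: "nat \<Rightarrow> real" and V c u :: real
  assumes "(\<Sum>i<n. (a i)\<^sup>2) \<le> V" "\<And>i. i < n \<Longrightarrow> \<bar>a i\<bar> \<le> c" "0 \<le> c" "0 < u"
  shows "measure (gauss_measure n) {\<omega> \<in> space (gauss_measure n).
            2 * sqrt (V * u) + 2 * c * u < \<bar>\<Sum>i<n. a i * ((\<omega> i)\<^sup>2 - 1)\<bar>} \<le> 2 * exp (- u)"
proof -
  let ?x = "2 * sqrt (V * u) + 2 * c * u"
  let ?E = "\<lambda>a. {\<omega> \<in> space (gauss_measure n). ?x < (\<Sum>i<n. a i * ((\<omega> i)\<^sup>2 - 1))}"
  have "{\<omega> \<in> space (gauss_measure n). ?x < \<bar>\<Sum>i<n. a i * ((\<omega> i)\<^sup>2 - 1)\<bar>} = ?E a \<union> ?E (\<lambda>i. - a i)"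
    by (auto simp: abs_if sum_negf)
  moreover have "measure (gauss_measure n) (?E a \<union> ?E (\<lambda>i. - a i))
      \<le> measure (gauss_measure n) (?E a) + measure (gauss_measure n) (?E (\<lambda>i. - a i))"
    by (rule measure_Un_le) measurable
  moreover have "measure (gauss_measure n) (?E (\<lambda>i. - a i)) \<le> exp (- u)"
    using assms by (intro gauss_weighted_chi2_tail) auto
  ultimately show ?thesis
    using gauss_weighted_chi2_tail[OF assms] by simp
qed

section \<open>Coordinate geometry on \<open>\<real>\<^sup>T\<close>\<close>

lemma norm_T_eq_L2_set: "norm_T T a = L2_set a T"
  unfolding norm_T_def L2_set_def ..

lemma norm_T_nonneg [simp]: "0 \<le> norm_T T a"
  by (simp add: norm_T_eq_L2_set)

lemma norm_T_scale: "norm_T T (\<lambda>j. c * u j) = \<bar>c\<bar> * norm_T T u"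
proof -
  have "norm_T T (\<lambda>j. c * u j) = L2_set (\<lambda>j. \<bar>c\<bar> * u j) T"
    unfolding norm_T_eq_L2_set L2_set_def by (simp add: power_mult_distrib)
  then show ?thesis
    unfolding norm_T_eq_L2_set by (simp add: L2_set_right_distrib)
qed

lemma norm_T_triangle: "norm_T T (\<lambda>j. u j + v j) \<le> norm_T T u + norm_T T v"
  unfolding norm_T_eq_L2_set by (rule L2_set_triangle_ineq)

lemma norm_T_lincomb3:
  "norm_T T (\<lambda>j. a * u j + b * v j + c * w j) \<le> \<bar>a\<bar> * norm_T T u + \<bar>b\<bar> * norm_T T v + \<bar>c\<bar> * norm_T T w"
  using norm_T_triangle[of T "\<lambda>j. a * u j + b * v j" "\<lambda>j. c * w j"]
    norm_T_triangle[of T "\<lambda>j. a * u j" "\<lambda>j. b * v j"]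
  by (simp add: norm_T_scale)

lemma norm_T_diff_commute: "norm_T T (\<lambda>j. u j - v j) = norm_T T (\<lambda>j. v j - u j)"
  unfolding norm_T_def by (simp add: power2_commute)

lemma abs_ip_T_le: "\<bar>ip_T T a z\<bar> \<le> norm_T T a * norm_T T z"
proof -
  have "\<bar>ip_T T a z\<bar> \<le> (\<Sum>j\<in>T. \<bar>a j\<bar> * \<bar>z j\<bar>)"
    unfolding ip_T_def by (rule order_trans[OF sum_abs]) (simp add: abs_mult)
  also have "\<dots> \<le> norm_T T a * norm_T T z"
    unfolding norm_T_eq_L2_set by (rule L2_set_mult_ineq)
  finally show ?thesis .
qed

lemma ip_T_lincomb3:
  "ip_T T a (\<lambda>j. \<alpha> * u j + \<beta> * v j + \<gamma> * w j) = \<alpha> * ip_T T a u + \<beta> * ip_T T a v + \<gamma> * ip_T T a w"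
  unfolding ip_T_def by (simp add: sum.distrib sum_distrib_left algebra_simps)

lemma ip_T_scale: "ip_T T a (\<lambda>j. c * u j) = c * ip_T T a u"
  unfolding ip_T_def by (simp add: sum_distrib_left algebra_simps)

lemma ip_T_diff: "ip_T T a (\<lambda>j. u j - v j) = ip_T T a u - ip_T T a v"
  unfolding ip_T_def by (simp add: sum_subtractf algebra_simps)

lemma ip_T_cong: "(\<And>j. j \<in> T \<Longrightarrow> u j = v j) \<Longrightarrow> ip_T T a u = ip_T T a v"
  unfolding ip_T_def by (intro sum.cong) auto

lemma ip_T_eq_0: "finite T \<Longrightarrow> norm_T T u = 0 \<Longrightarrow> ip_T T a u = 0"
  unfolding norm_T_eq_L2_set ip_T_def by (simp add: L2_set_eq_0_iff)

lemma normalize_in_unit_sphere_T: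
  "norm_T T v \<noteq> 0 \<Longrightarrow> (\<lambda>j. v j / norm_T T v) \<in> unit_sphere_T T"
  using norm_T_scale[of T "1 / norm_T T v" v] by (simp add: unit_sphere_T_def)

lemma unit_sphere_T_nonempty:
  assumes "finite T" "T \<noteq> {}"
  shows "unit_sphere_T T \<noteq> {}"
proof -
  obtain j0 where "j0 \<in> T" using assms(2) by blast
  then have "norm_T T (\<lambda>j. if j = j0 then 1 else 0) = 1"
    using assms(1) by (simp add: norm_T_def if_distrib[of "\<lambda>x. x\<^sup>2"] sum.If_cases)
  then show ?thesis unfolding unit_sphere_T_def by blast
qed

section \<open>Forms of rank-one symmetric tensors\<close>

text \<open>The form \<open>z \<mapsto> \<Sum>\<^sub>i w\<^sub>i (x\<^sub>i\<^sup>T z)\<^sup>k\<close> of the symmetric tensor \<open>\<Sum>\<^sub>i w\<^sub>i x\<^sub>i\<^sup>\<otimes>\<^sup>k\<close>, and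
  its spectral norm.\<close>

definition tensor_form ::
    "nat \<Rightarrow> (nat \<Rightarrow> real) \<Rightarrow> (nat \<Rightarrow> nat \<Rightarrow> real) \<Rightarrow> nat \<Rightarrow> nat set \<Rightarrow> (nat \<Rightarrow> real) \<Rightarrow> real" where
  "tensor_form n w x k T z = (\<Sum>i<n. w i * ip_T T (x i) z ^ k)"

definition Lambda_abs :: "nat set \<Rightarrow> ((nat \<Rightarrow> real) \<Rightarrow> real) \<Rightarrow> real" where
  "Lambda_abs T A = (SUP z \<in> unit_sphere_T T. \<bar>A z\<bar>)"

lemma abs_tensor_form_le_sum:
  assumes "z \<in> unit_sphere_T T"
  shows "\<bar>tensor_form n w x k T z\<bar> \<le> (\<Sum>i<n. \<bar>w i\<bar> * norm_T T (x i) ^ k)"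
  unfolding tensor_form_def
proof (rule order_trans[OF sum_abs sum_mono])
  fix i
  have "\<bar>ip_T T (x i) z\<bar> \<le> norm_T T (x i)"
    using abs_ip_T_le[of T "x i" z] assms by (simp add: unit_sphere_T_def)
  then show "\<bar>w i * ip_T T (x i) z ^ k\<bar> \<le> \<bar>w i\<bar> * norm_T T (x i) ^ k"
    by (simp add: abs_mult power_abs mult_left_mono power_mono)
qed

lemma bdd_above_abs_tensor_form: "bdd_above ((\<lambda>z. \<bar>tensor_form n w x k T z\<bar>) ` unit_sphere_T T)"
  using abs_tensor_form_le_sum by (intro bdd_aboveI2) blast

lemma bdd_above_tensor_form: "bdd_above (tensor_form n w x k T ` unit_sphere_T T)"
  using abs_tensor_form_le_sum by (intro bdd_aboveI2) (blast dest: abs_le_D1)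

lemma abs_tensor_form_le_Lambda_abs:
  "z \<in> unit_sphere_T T \<Longrightarrow> \<bar>tensor_form n w x k T z\<bar> \<le> Lambda_abs T (tensor_form n w x k T)"
  unfolding Lambda_abs_def by (rule cSUP_upper[OF _ bdd_above_abs_tensor_form])

lemma tensor_form_le_Lambda_max:
  "z \<in> unit_sphere_T T \<Longrightarrow> tensor_form n w x k T z \<le> Lambda_max T (tensor_form n w x k T)"
  unfolding Lambda_max_def by (rule cSUP_upper[OF _ bdd_above_tensor_form])

lemma Lambda_abs_nonneg:
  assumes "finite T" "T \<noteq> {}"
  shows "0 \<le> Lambda_abs T (tensor_form n w x k T)"
  using unit_sphere_T_nonempty[OF assms] abs_tensor_form_le_Lambda_abs
  by (meson abs_ge_zero all_not_in_conv order_trans)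

lemma Lambda_max_le_Lambda_abs:
  assumes "finite T" "T \<noteq> {}"
  shows "Lambda_max T (tensor_form n w x k T) \<le> Lambda_abs T (tensor_form n w x k T)"
  unfolding Lambda_max_def using unit_sphere_T_nonempty[OF assms]
  by (rule cSUP_least) (meson abs_ge_self abs_tensor_form_le_Lambda_abs order_trans)

lemma Lambda_abs_le:
  assumes "finite T" "T \<noteq> {}" "\<And>z. z \<in> unit_sphere_T T \<Longrightarrow> \<bar>tensor_form n w x k T z\<bar> \<le> B"
  shows "Lambda_abs T (tensor_form n w x k T) \<le> B"
  unfolding Lambda_abs_def using unit_sphere_T_nonempty[OF assms(1,2)] assms(3) by (rule cSUP_least)

lemma abs_tensor_form_le:
  assumes "finite T" "T \<noteq> {}" "0 < k" "norm_T T u \<le> \<rho>"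
  shows "\<bar>tensor_form n w x k T u\<bar> \<le> Lambda_abs T (tensor_form n w x k T) * \<rho> ^ k"
proof -
  let ?F = "Lambda_abs T (tensor_form n w x k T)"
  have "\<bar>tensor_form n w x k T u\<bar> \<le> ?F * norm_T T u ^ k"
  proof (cases "norm_T T u = 0")
    case True
    then show ?thesis
      using ip_T_eq_0[OF assms(1) True] assms(3) by (simp add: tensor_form_def power_0_left)
  next
    case False
    let ?N = "norm_T T u"
    have "tensor_form n w x k T u = ?N ^ k * tensor_form n w x k T (\<lambda>j. u j / ?N)"
      using ip_T_scale[of T _ "1 / ?N" u] False
      by (simp add: tensor_form_def sum_distrib_left power_divide algebra_simps)
    then show ?thesis
      using abs_tensor_form_le_Lambda_abs[OF normalize_in_unit_sphere_T[OF False]]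
      by (simp add: abs_mult mult_left_mono mult.commute)
  qed
  also have "\<dots> \<le> ?F * \<rho> ^ k"
    using assms by (intro mult_left_mono power_mono Lambda_abs_nonneg) auto
  finally show ?thesis .
qed

text \<open>Polarization: with \<open>d = z - y\<close>, the vectors \<open>d/\<eta> \<plusminus> \<eta>(z + y)\<close> have norm at most \<open>3\<eta>\<close>
  and the difference of their squared projections is \<open>4((x\<^sup>Tz)\<^sup>2 - (x\<^sup>Ty)\<^sup>2)\<close>.\<close>

lemma tensor_form2_diff_le:
  assumes "finite T" "T \<noteq> {}" "z \<in> unit_sphere_T T" "y \<in> unit_sphere_T T"
    and "0 < \<eta>" "norm_T T (\<lambda>j. z j - y j) \<le> \<eta>\<^sup>2"
  shows "\<bar>tensor_form n w x 2 T z - tensor_form n w x 2 T y\<bar> \<le> 9 / 2 * \<eta>\<^sup>2 * Lambda_abs T (tensor_form n w x 2 T)"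
proof -
  let ?A = "tensor_form n w x 2 T" and ?F = "Lambda_abs T (tensor_form n w x 2 T)"
  define d where "d = (\<lambda>j. z j - y j)"
  define p where "p = (\<lambda>j. (1 / \<eta>) * d j + \<eta> * z j + \<eta> * y j)"
  define m where "m = (\<lambda>j. (1 / \<eta>) * d j + (- \<eta>) * z j + (- \<eta>) * y j)"
  have "(1 / \<eta>) * norm_T T d \<le> (1 / \<eta>) * \<eta>\<^sup>2"
    using assms(5,6) unfolding d_def by (intro mult_left_mono) auto
  then have d: "(1 / \<eta>) * norm_T T d \<le> \<eta>" using assms(5) by (simp add: power2_eq_square)
  have np: "norm_T T p \<le> 3 * \<eta>" and nm: "norm_T T m \<le> 3 * \<eta>"
    using norm_T_lincomb3[of T "1/\<eta>" d \<eta> z \<eta> y] norm_T_lincomb3[of T "1/\<eta>" d "-\<eta>" z "-\<eta>" y]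
      assms(3-5) d unfolding p_def m_def by (auto simp: unit_sphere_T_def)
  have pm: "\<bar>?A p\<bar> \<le> ?F * (3 * \<eta>)\<^sup>2" "\<bar>?A m\<bar> \<le> ?F * (3 * \<eta>)\<^sup>2"
    by (rule abs_tensor_form_le[OF assms(1,2) _ np] abs_tensor_form_le[OF assms(1,2) _ nm], simp)+
  have difference: "ip_T T (x i) p ^ 2 - ip_T T (x i) m ^ 2 = 4 * (ip_T T (x i) z ^ 2 - ip_T T (x i) y ^ 2)" for i
    unfolding p_def m_def d_def ip_T_lincomb3 ip_T_diff using assms(5)
    by (simp add: power2_eq_square field_simps)
  have "?A p - ?A m = (\<Sum>i<n. w i * (ip_T T (x i) p ^ 2 - ip_T T (x i) m ^ 2))"
    unfolding tensor_form_def by (simp add: sum_subtractf right_diff_distrib)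
  also have "\<dots> = 4 * (?A z - ?A y)"
    unfolding difference tensor_form_def by (simp add: sum_distrib_left sum_subtractf algebra_simps)
  finally have "\<bar>?A p - ?A m\<bar> = 4 * \<bar>?A z - ?A y\<bar>" by (simp only: abs_mult abs_numeral)
  then have "4 * \<bar>?A z - ?A y\<bar> \<le> \<bar>?A p\<bar> + \<bar>?A m\<bar>" using abs_triangle_ineq4 by metis
  with pm show ?thesis by (simp add: mult_ac)
qed

lemma abs_trilinear_le:
  assumes "finite T" "T \<noteq> {}"
    and "norm_T T a \<le> \<rho>" "norm_T T b \<le> \<rho>" "norm_T T c \<le> \<rho>"
  shows "\<bar>\<Sum>i<n. w i * (ip_T T (x i) a * ip_T T (x i) b * ip_T T (x i) c)\<bar>
     \<le> 9 / 2 * Lambda_abs T (tensor_form n w x 3 T) * \<rho> ^ 3"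
proof -
  let ?A = "tensor_form n w x 3 T" and ?F = "Lambda_abs T (tensor_form n w x 3 T)"
  define s where "s \<beta> \<gamma> = (\<lambda>j. 1 * a j + \<beta> * b j + \<gamma> * c j)" for \<beta> \<gamma> :: real
  have bound: "\<bar>?A (s \<beta> \<gamma>)\<bar> \<le> ?F * (3 * \<rho>) ^ 3" if "\<bar>\<beta>\<bar> = 1" "\<bar>\<gamma>\<bar> = 1" for \<beta> \<gamma>
  proof -
    have "norm_T T (s \<beta> \<gamma>) \<le> 3 * \<rho>"
      using norm_T_lincomb3[of T 1 a \<beta> b \<gamma> c] assms(3-5) that by (simp add: s_def)
    then show ?thesis by (rule abs_tensor_form_le[OF assms(1,2), rotated]) simp
  qed
  have polarization: "ip_T T (x i) (s 1 1) ^ 3 - ip_T T (x i) (s 1 (-1)) ^ 3 - ip_T T (x i) (s (-1) 1) ^ 3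
      + ip_T T (x i) (s (-1) (-1)) ^ 3 = 24 * (ip_T T (x i) a * ip_T T (x i) b * ip_T T (x i) c)" for i
    unfolding s_def ip_T_lincomb3 by (simp add: power3_eq_cube algebra_simps)
  have "?A (s 1 1) - ?A (s 1 (-1)) - ?A (s (-1) 1) + ?A (s (-1) (-1))
     = (\<Sum>i<n. w i * (ip_T T (x i) (s 1 1) ^ 3 - ip_T T (x i) (s 1 (-1)) ^ 3
        - ip_T T (x i) (s (-1) 1) ^ 3 + ip_T T (x i) (s (-1) (-1)) ^ 3))"
    unfolding tensor_form_def by (simp add: sum.distrib sum_subtractf algebra_simps)
  also have "\<dots> = 24 * (\<Sum>i<n. w i * (ip_T T (x i) a * ip_T T (x i) b * ip_T T (x i) c))"
    unfolding polarization by (simp add: sum_distrib_left algebra_simps)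
  finally have "24 * (\<Sum>i<n. w i * (ip_T T (x i) a * ip_T T (x i) b * ip_T T (x i) c))
      = ?A (s 1 1) - ?A (s 1 (-1)) - ?A (s (-1) 1) + ?A (s (-1) (-1))" ..
  then have "\<bar>24 * (\<Sum>i<n. w i * (ip_T T (x i) a * ip_T T (x i) b * ip_T T (x i) c))\<bar> \<le> 4 * (?F * (3 * \<rho>) ^ 3)"
    using bound[of 1 1] bound[of 1 "-1"] bound[of "-1" 1] bound[of "-1" "-1"]
    unfolding abs_le_iff by auto
  then show ?thesis by (simp add: abs_mult power3_eq_cube mult_ac)
qed

lemma tensor_form3_diff_le:
  assumes "finite T" "T \<noteq> {}" "z \<in> unit_sphere_T T" "y \<in> unit_sphere_T T"
    and "0 < \<eta>" "norm_T T (\<lambda>j. z j - y j) \<le> \<eta> ^ 3"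
  shows "\<bar>tensor_form n w x 3 T z - tensor_form n w x 3 T y\<bar> \<le> 27 / 2 * \<eta> ^ 3 * Lambda_abs T (tensor_form n w x 3 T)"
proof -
  let ?A = "tensor_form n w x 3 T" and ?F = "Lambda_abs T (tensor_form n w x 3 T)"
  let ?tri = "\<lambda>a b c. \<Sum>i<n. w i * (ip_T T (x i) a * ip_T T (x i) b * ip_T T (x i) c)"
  define a where "a = (\<lambda>j. (1 / \<eta>\<^sup>2) * (z j - y j))"
  define b where "b = (\<lambda>j. \<eta> * z j)"
  define c where "c = (\<lambda>j. \<eta> * y j)"
  have "norm_T T a = (1 / \<eta>\<^sup>2) * norm_T T (\<lambda>j. z j - y j)"
    unfolding a_def norm_T_scale by simp
  also have "\<dots> \<le> (1 / \<eta>\<^sup>2) * \<eta> ^ 3"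
    using assms(5,6) by (intro mult_left_mono) auto
  finally have "norm_T T a \<le> (1 / \<eta>\<^sup>2) * \<eta> ^ 3" .
  then have abc: "norm_T T a \<le> \<eta>" "norm_T T b \<le> \<eta>" "norm_T T c \<le> \<eta>"
    using assms(3-5) by (auto simp: b_def c_def norm_T_scale unit_sphere_T_def power2_eq_square power3_eq_cube)
  have scale: "1 / \<eta>\<^sup>2 * d * (\<eta> * s) * (\<eta> * t) = d * s * t" for d s t
    using assms(5) by (simp add: field_simps power2_eq_square)
  \<comment> \<open>\<open>u\<^sup>3 - v\<^sup>3 = (u - v)(u\<^sup>2 + u v + v\<^sup>2)\<close>\<close>
  have "w i * ip_T T (x i) z ^ 3 - w i * ip_T T (x i) y ^ 3
      = w i * (ip_T T (x i) a * ip_T T (x i) b * ip_T T (x i) b)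
      + w i * (ip_T T (x i) a * ip_T T (x i) b * ip_T T (x i) c)
      + w i * (ip_T T (x i) a * ip_T T (x i) c * ip_T T (x i) c)" for i
    unfolding a_def b_def c_def ip_T_scale ip_T_diff scale by (simp add: power3_eq_cube algebra_simps)
  then have "?A z - ?A y = ?tri a b b + ?tri a b c + ?tri a c c"
    unfolding tensor_form_def sum_subtractf[symmetric] by (simp add: sum.distrib)
  moreover have triangle: "\<bar>p + q + r\<bar> \<le> \<bar>p\<bar> + \<bar>q\<bar> + \<bar>r\<bar>" for p q r :: real
    by (metis abs_triangle_ineq add_right_mono order_trans)
  ultimately have "\<bar>?A z - ?A y\<bar> \<le> \<bar>?tri a b b\<bar> + \<bar>?tri a b c\<bar> + \<bar>?tri a c c\<bar>"
    by (simp only:)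
  also have "\<dots> \<le> 9 / 2 * ?F * \<eta> ^ 3 + 9 / 2 * ?F * \<eta> ^ 3 + 9 / 2 * ?F * \<eta> ^ 3"
    by (intro add_mono abs_trilinear_le[OF assms(1,2) abc(1,2,2)] abs_trilinear_le[OF assms(1,2) abc(1,2,3)]
        abs_trilinear_le[OF assms(1,2) abc(1,3,3)])
  finally show ?thesis by (simp add: algebra_simps)
qed

lemma tensor_form_lipschitz:
  assumes "k \<in> {2, 3}" "finite T" "z \<in> unit_sphere_T T" "y \<in> unit_sphere_T T"
  shows "\<bar>tensor_form n w x k T z - tensor_form n w x k T y\<bar>
    \<le> 27 / 2 * Lambda_abs T (tensor_form n w x k T) * norm_T T (\<lambda>j. z j - y j)"
proof -
  let ?d = "norm_T T (\<lambda>j. z j - y j)"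
  have "T \<noteq> {}" using assms(3) by (auto simp: unit_sphere_T_def norm_T_def)
  note F = Lambda_abs_nonneg[OF assms(2) this, of n w x k]
  show ?thesis
  proof (cases "?d = 0")
    case True
    then have "ip_T T a z = ip_T T a y" for a
      using ip_T_eq_0[OF assms(2) True, of a] by (simp add: ip_T_diff)
    then show ?thesis using F by (simp add: tensor_form_def)
  next
    case False
    define \<eta> where "\<eta> = root k ?d"
    have "0 < ?d" using False by (simp add: order_less_le)
    moreover have "0 < k" using assms(1) by auto
    ultimately
    have \<eta>: "0 < \<eta>" "?d = \<eta> ^ k" by (simp_all add: \<eta>_def real_root_pow_pos2)
    have "\<bar>tensor_form n w x k T z - tensor_form n w x k T y\<bar>
        \<le> 27 / 2 * \<eta> ^ k * Lambda_abs T (tensor_form n w x k T)"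
    proof (cases "k = 2")
      case True
      have "\<bar>tensor_form n w x 2 T z - tensor_form n w x 2 T y\<bar>
          \<le> 9 / 2 * \<eta>\<^sup>2 * Lambda_abs T (tensor_form n w x 2 T)"
        using tensor_form2_diff_le[OF assms(2) \<open>T \<noteq> {}\<close> assms(3,4) \<eta>(1)] \<eta>(2) True by simp
      also have "\<dots> \<le> 27 / 2 * \<eta>\<^sup>2 * Lambda_abs T (tensor_form n w x 2 T)"
        using F True by (intro mult_right_mono) auto
      finally show ?thesis using True by simp
    next
      case False
      then have "k = 3" using assms(1) by simp
      then show ?thesis
        using tensor_form3_diff_le[OF assms(2) \<open>T \<noteq> {}\<close> assms(3,4) \<eta>(1)] \<eta>(2) by simp
    qed
    then show ?thesis by (simp add: \<eta>(2) mult_ac)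
  qed
qed

section \<open>Nets on the unit sphere\<close>

lemma sum_half_power_abs_le:
  "(\<Sum>r\<in>{- int R..int R}. (1/2::real) ^ nat \<bar>r\<bar>) \<le> 3 - 2 * (1/2) ^ R"
proof (induction R)
  case (Suc R)
  have "{- int (Suc R)..int (Suc R)} = insert (- int (Suc R)) (insert (int (Suc R)) {- int R..int R})"
    by auto
  then have "(\<Sum>r\<in>{- int (Suc R)..int (Suc R)}. (1/2::real) ^ nat \<bar>r\<bar>)
      = 2 * (1/2) ^ Suc R + (\<Sum>r\<in>{- int R..int R}. (1/2::real) ^ nat \<bar>r\<bar>)"
    by (simp add: nat_add_distrib)
  with Suc show ?case by simp
qed simp

text \<open>Weighting each point \<open>m\<close> by \<open>2\<^sup>R 2\<^sup>-\<^sup>|\<^sup>m\<^sup>|\<^sup>\<^sub>1 \<ge> 1\<close> turns the count into a product of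
  geometric sums.\<close>

lemma card_l1_grid_le:
  assumes "finite T"
  shows "real (card {m \<in> PiE T (\<lambda>_. {- int R..int R}). (\<Sum>j\<in>T. \<bar>m j\<bar>) \<le> int R}) \<le> 2 ^ R * 3 ^ card T"
proof -
  let ?P = "PiE T (\<lambda>_. {- int R..int R})"
  let ?M = "{m \<in> ?P. (\<Sum>j\<in>T. \<bar>m j\<bar>) \<le> int R}"
  let ?weight = "\<lambda>m. 2 ^ R * (\<Prod>j\<in>T. (1/2::real) ^ nat \<bar>m j\<bar>)"
  have finite: "finite ?P" using assms by (intro finite_PiE) auto
  have "real (card ?M) = (\<Sum>m\<in>?M. 1)" by simp
  also have "\<dots> \<le> (\<Sum>m\<in>?M. ?weight m)"
  proof (intro sum_mono)
    fix m assume m: "m \<in> ?M"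
    have "int (\<Sum>j\<in>T. nat \<bar>m j\<bar>) \<le> int R" using m by simp
    then have "(\<Sum>j\<in>T. nat \<bar>m j\<bar>) \<le> R" by (simp only: of_nat_le_iff)
    then have "(1/2::real) ^ R \<le> (1/2) ^ (\<Sum>j\<in>T. nat \<bar>m j\<bar>)"
      by (intro power_decreasing) auto
    then have "2 ^ R * (1/2::real) ^ R \<le> ?weight m"
      by (simp add: power_sum)
    then show "1 \<le> ?weight m" by (simp add: power_mult_distrib[symmetric])
  qed
  also have "\<dots> \<le> (\<Sum>m\<in>?P. ?weight m)"
    using finite by (intro sum_mono2) (auto intro!: mult_nonneg_nonneg prod_nonneg)
  also have "\<dots> = 2 ^ R * (\<Prod>j\<in>T. \<Sum>r\<in>{- int R..int R}. (1/2::real) ^ nat \<bar>r\<bar>)"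
    using prod_sum_PiE[OF assms, of "\<lambda>_. {- int R..int R}" "\<lambda>_ r. (1/2::real) ^ nat \<bar>r\<bar>"]
    by (simp add: sum_distrib_left)
  also have "\<dots> \<le> 2 ^ R * (\<Prod>j\<in>T. 3)"
    using sum_half_power_abs_le[of R]
    by (intro mult_left_mono prod_mono) (auto intro: sum_nonneg order_trans)
  finally show ?thesis by simp
qed

lemma round_toward_zero:
  fixes q :: real
  obtains m :: int where "\<bar>real_of_int m\<bar> \<le> \<bar>q\<bar>" "\<bar>q - real_of_int m\<bar> \<le> 1"
proof (cases "0 \<le> q")
  case True
  show ?thesis
  proof (rule that[of "\<lfloor>q\<rfloor>"])
    show "\<bar>real_of_int \<lfloor>q\<rfloor>\<bar> \<le> \<bar>q\<bar>" using True of_int_floor_le[of q] by simp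
    show "\<bar>q - real_of_int \<lfloor>q\<rfloor>\<bar> \<le> 1"
      using of_int_floor_le[of q] real_of_int_floor_add_one_gt[of q] unfolding abs_le_iff by linarith
  qed
next
  case False
  then show ?thesis using ceiling_correct[of q] by (intro that[of "\<lceil>q\<rceil>"]) auto
qed

lemma sum_abs_le_sqrt_card:
  "z \<in> unit_sphere_T T \<Longrightarrow> (\<Sum>j\<in>T. \<bar>z j\<bar>) \<le> sqrt (real (card T))"
  using L2_set_mult_ineq[of z "\<lambda>_. 1" T]
  by (simp add: unit_sphere_T_def norm_T_eq_L2_set L2_set_constant)

text \<open>Rounding the coordinates of \<open>z\<close> towards zero gives a point of the scaled grid \<open>h \<int>\<^sup>T\<close> whose
  \<open>\<ell>\<^sub>1\<close>-norm is at most that of \<open>z\<close>.\<close>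

lemma exists_grid_point_near:
  assumes "finite T" "z \<in> unit_sphere_T T" "0 < h" "sqrt (real (card T)) \<le> h * real R"
  shows "\<exists>m \<in> {m \<in> PiE T (\<lambda>_. {- int R..int R}). (\<Sum>j\<in>T. \<bar>m j\<bar>) \<le> int R}.
           norm_T T (\<lambda>j. z j - h * real_of_int (m j)) \<le> h * sqrt (real (card T))"
proof -
  have "\<forall>j. \<exists>m::int. \<bar>real_of_int m\<bar> \<le> \<bar>z j / h\<bar> \<and> \<bar>z j / h - real_of_int m\<bar> \<le> 1"
    by (meson round_toward_zero)
  then obtain m' where m': "\<And>j. \<bar>real_of_int (m' j)\<bar> \<le> \<bar>z j / h\<bar>" "\<And>j. \<bar>z j / h - real_of_int (m' j)\<bar> \<le> 1"
    by metis
  have close: "\<bar>z j - h * real_of_int (m' j)\<bar> \<le> h" for j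
  proof -
    have "z j - h * real_of_int (m' j) = h * (z j / h - real_of_int (m' j))"
      using assms(3) by (simp add: field_simps)
    then show ?thesis using m'(2)[of j] assms(3) by (simp add: abs_mult mult_left_le)
  qed
  define m where "m = restrict m' T"
  have "(\<Sum>j\<in>T. \<bar>real_of_int (m j)\<bar>) \<le> (\<Sum>j\<in>T. \<bar>z j\<bar>) / h"
    unfolding sum_divide_distrib using m'(1) assms(3) by (intro sum_mono) (simp add: m_def abs_divide)
  also have "\<dots> \<le> sqrt (real (card T)) / h"
    using sum_abs_le_sqrt_card[OF assms(2)] assms(3) by (intro divide_right_mono) auto
  also have "\<dots> \<le> real R" using assms(3,4) by (simp add: divide_le_eq mult.commute)
  finally have "real_of_int (\<Sum>j\<in>T. \<bar>m j\<bar>) \<le> real_of_int (int R)" by simp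
  then have l1: "(\<Sum>j\<in>T. \<bar>m j\<bar>) \<le> int R" by (simp only: of_int_le_iff)
  moreover have "m \<in> PiE T (\<lambda>_. {- int R..int R})"
  proof -
    have "\<bar>m j\<bar> \<le> int R" if "j \<in> T" for j
      using member_le_sum[of j T "\<lambda>j. \<bar>m j\<bar>"] that assms(1) l1 by simp
    then show ?thesis by (force simp: m_def abs_le_iff)
  qed
  moreover have "norm_T T (\<lambda>j. z j - h * real_of_int (m j)) \<le> h * sqrt (real (card T))"
  proof -
    have "(\<Sum>j\<in>T. (z j - h * real_of_int (m j))\<^sup>2) \<le> (\<Sum>j\<in>T. h\<^sup>2)"
      using close assms(3) by (intro sum_mono) (simp add: m_def abs_le_square_iff[symmetric])
    then have "norm_T T (\<lambda>j. z j - h * real_of_int (m j)) \<le> sqrt (real (card T) * h\<^sup>2)"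
      unfolding norm_T_def by (simp add: real_sqrt_le_mono)
    then show ?thesis using assms(3) by (simp add: real_sqrt_mult mult.commute)
  qed
  ultimately show ?thesis by blast
qed

lemma norm_T_reverse_triangle: "\<bar>norm_T T u - norm_T T v\<bar> \<le> norm_T T (\<lambda>j. u j - v j)"
  using norm_T_triangle[of T "\<lambda>j. u j - v j" v] norm_T_triangle[of T "\<lambda>j. v j - u j" u]
    norm_T_diff_commute[of T u v] by simp

lemma norm_T_diff_normalize_le:
  assumes "z \<in> unit_sphere_T T" "norm_T T (\<lambda>j. z j - v j) < 1"
  shows "norm_T T v \<noteq> 0" "norm_T T (\<lambda>j. z j - v j / norm_T T v) \<le> 2 * norm_T T (\<lambda>j. z j - v j)"
proof -
  have close: "\<bar>1 - norm_T T v\<bar> \<le> norm_T T (\<lambda>j. z j - v j)"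
    using norm_T_reverse_triangle[of T z v] assms(1) by (simp add: unit_sphere_T_def)
  then show "norm_T T v \<noteq> 0" using assms(2) by auto
  then have "norm_T T v * \<bar>1 - 1 / norm_T T v\<bar> = \<bar>norm_T T v * (1 - 1 / norm_T T v)\<bar>"
    by (simp add: abs_mult)
  also have "norm_T T v * (1 - 1 / norm_T T v) = norm_T T v - 1"
    using \<open>norm_T T v \<noteq> 0\<close> by (simp add: field_simps)
  finally have "norm_T T v * \<bar>1 - 1 / norm_T T v\<bar> = \<bar>1 - norm_T T v\<bar>"
    by (simp add: abs_minus_commute)
  then have "norm_T T (\<lambda>j. v j - v j / norm_T T v) = \<bar>1 - norm_T T v\<bar>"
    using norm_T_scale[of T "1 - 1 / norm_T T v" v] by (simp add: algebra_simps)
  then show "norm_T T (\<lambda>j. z j - v j / norm_T T v) \<le> 2 * norm_T T (\<lambda>j. z j - v j)"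
    using norm_T_triangle[of T "\<lambda>j. z j - v j" "\<lambda>j. v j - v j / norm_T T v"] close by simp
qed

lemma unit_sphere_T_net_exists:
  assumes "finite T" "T \<noteq> {}" "0 < \<epsilon>" "\<epsilon> < 2" "2 * real (card T) / \<epsilon> \<le> real R"
  shows "\<exists>N. finite N \<and> N \<subseteq> unit_sphere_T T \<and> real (card N) \<le> 2 ^ R * 3 ^ card T \<and>
     (\<forall>z \<in> unit_sphere_T T. \<exists>y \<in> N. norm_T T (\<lambda>j. z j - y j) \<le> \<epsilon>)"
proof -
  define t where "t = real (card T)"
  have t: "0 < t" "sqrt t * sqrt t = t" using assms(1,2) by (simp_all add: t_def card_gt_0_iff)
  define h where "h = \<epsilon> / (2 * sqrt t)"
  have h: "0 < h" "h * sqrt t = \<epsilon> / 2" "sqrt t \<le> h * real R"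
    using assms(3,5) t by (auto simp: h_def t_def field_simps)
  define M where "M = {m \<in> PiE T (\<lambda>_. {- int R..int R}). (\<Sum>j\<in>T. \<bar>m j\<bar>) \<le> int R}"
  define v where "v m = (\<lambda>j. h * real_of_int (m j))" for m :: "nat \<Rightarrow> int"
  define N where "N = (\<lambda>m j. v m j / norm_T T (v m)) ` {m \<in> M. norm_T T (v m) \<noteq> 0}"
  have "finite (PiE T (\<lambda>_. {- int R..int R}))" using assms(1) by (simp add: finite_PiE)
  then have "finite M" unfolding M_def by simp
  then have "finite N" "card N \<le> card M"
    unfolding N_def by (auto intro!: card_image_le[THEN order_trans] card_mono)
  moreover have "N \<subseteq> unit_sphere_T T" unfolding N_def using normalize_in_unit_sphere_T by auto
  moreover have "real (card M) \<le> 2 ^ R * 3 ^ card T" unfolding M_def by (rule card_l1_grid_le[OF assms(1)])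
  moreover have "\<exists>y \<in> N. norm_T T (\<lambda>j. z j - y j) \<le> \<epsilon>" if z: "z \<in> unit_sphere_T T" for z
  proof -
    obtain m where m: "m \<in> M" "norm_T T (\<lambda>j. z j - v m j) \<le> \<epsilon> / 2"
      using exists_grid_point_near[OF assms(1) z h(1)] h unfolding M_def v_def t_def by auto
    then have "norm_T T (\<lambda>j. z j - v m j) < 1" using assms(4) by linarith
    from norm_T_diff_normalize_le[OF z this] m show ?thesis
      unfolding N_def by (intro bexI[of _ "\<lambda>j. v m j / norm_T T (v m)"]) auto
  qed
  ultimately show ?thesis by (intro exI[of _ N]) auto
qed

lemma Lambda_abs_le_of_net:
  assumes "k \<in> {2, 3}" "finite T" "T \<noteq> {}" "N \<subseteq> unit_sphere_T T"
    and "\<forall>z \<in> unit_sphere_T T. \<exists>y \<in> N. norm_T T (\<lambda>j. z j - y j) \<le> \<epsilon>"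
    and "\<forall>y \<in> N. \<bar>tensor_form n w x k T y\<bar> \<le> B"
  shows "(1 - 27 / 2 * \<epsilon>) * Lambda_abs T (tensor_form n w x k T) \<le> B"
proof -
  let ?A = "tensor_form n w x k T" and ?F = "Lambda_abs T (tensor_form n w x k T)"
  have "?F \<le> B + 27 / 2 * ?F * \<epsilon>"
  proof (rule Lambda_abs_le[OF assms(2,3)])
    fix z assume z: "z \<in> unit_sphere_T T"
    then obtain y where y: "y \<in> N" "norm_T T (\<lambda>j. z j - y j) \<le> \<epsilon>" using assms(5) by blast
    have "\<bar>?A z - ?A y\<bar> \<le> 27 / 2 * ?F * norm_T T (\<lambda>j. z j - y j)"
      using tensor_form_lipschitz[OF assms(1,2) z] y assms(4) by blast
    also have "\<dots> \<le> 27 / 2 * ?F * \<epsilon>"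
      using y(2) Lambda_abs_nonneg[OF assms(2,3)] by (intro mult_left_mono) auto
    finally show "\<bar>?A z\<bar> \<le> B + 27 / 2 * ?F * \<epsilon>"
      using assms(6) y(1) unfolding abs_le_iff by fastforce
  qed
  then show ?thesis by (simp add: algebra_simps)
qed

text \<open>A countable union of ever finer nets determines \<open>Lambda_max\<close>; this is what makes the
  event of the theorem measurable.\<close>

lemma Lambda_max_le_iff_countable:
  assumes "k \<in> {2, 3}" "finite T" "T \<noteq> {}"
  shows "\<exists>D. countable D \<and> D \<noteq> {} \<and>
    (\<forall>n w x c. Lambda_max T (tensor_form n w x k T) \<le> c \<longleftrightarrow> (\<forall>y \<in> D. tensor_form n w x k T y \<le> c))"
proof -
  let ?S = "unit_sphere_T T"
  have "\<exists>N. finite N \<and> N \<subseteq> ?S \<and> (\<forall>z\<in>?S. \<exists>y\<in>N. norm_T T (\<lambda>j. z j - y j) \<le> inverse (real (Suc m)))"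
    for m
    using unit_sphere_T_net_exists[OF assms(2,3), of "inverse (real (Suc m))" "nat \<lceil>2 * real (card T) * real (Suc m)\<rceil>"]
    by (auto simp: field_simps)
  then obtain net where net: "\<And>m. finite (net m)" "\<And>m. net m \<subseteq> ?S"
    "\<And>m z. z \<in> ?S \<Longrightarrow> \<exists>y\<in>net m. norm_T T (\<lambda>j. z j - y j) \<le> inverse (real (Suc m))"
    by metis
  define D where "D = (\<Union>m. net m)"
  have "D \<subseteq> ?S" unfolding D_def using net(2) by blast
  have "countable D" unfolding D_def using net(1) by (simp add: countable_finite)
  moreover have "D \<noteq> {}" unfolding D_def using net(3) unit_sphere_T_nonempty[OF assms(2,3)] by blast
  moreover have "Lambda_max T (tensor_form n w x k T) \<le> c \<longleftrightarrow> (\<forall>y \<in> D. tensor_form n w x k T y \<le> c)"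
    for n w x c
  proof
    assume "Lambda_max T (tensor_form n w x k T) \<le> c"
    then show "\<forall>y \<in> D. tensor_form n w x k T y \<le> c"
      using tensor_form_le_Lambda_max \<open>D \<subseteq> ?S\<close> by (meson order_trans subsetD)
  next
    assume bound: "\<forall>y \<in> D. tensor_form n w x k T y \<le> c"
    let ?A = "tensor_form n w x k T" and ?K = "27 / 2 * Lambda_abs T (tensor_form n w x k T)"
    show "Lambda_max T ?A \<le> c"
      unfolding Lambda_max_def using unit_sphere_T_nonempty[OF assms(2,3)]
    proof (rule cSUP_least)
      fix z assume z: "z \<in> ?S"
      have "?A z \<le> c + ?K * inverse (real (Suc m))" for m
      proof -
        obtain y where y: "y \<in> net m" "norm_T T (\<lambda>j. z j - y j) \<le> inverse (real (Suc m))"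
          using net(3)[OF z] by blast
        have "\<bar>?A z - ?A y\<bar> \<le> ?K * norm_T T (\<lambda>j. z j - y j)"
          using tensor_form_lipschitz[OF assms(1,2) z] y(1) net(2) by blast
        also have "\<dots> \<le> ?K * inverse (real (Suc m))"
          using y(2) Lambda_abs_nonneg[OF assms(2,3)] by (intro mult_left_mono) auto
        finally have "\<bar>?A z - ?A y\<bar> \<le> ?K * inverse (real (Suc m))" .
        moreover have "?A y \<le> c" using bound y(1) unfolding D_def by blast
        ultimately show ?thesis unfolding abs_le_iff by linarith
      qed
      moreover have "(\<lambda>m. c + ?K * inverse (real (Suc m))) \<longlonglongrightarrow> c + ?K * 0"
        by (intro tendsto_intros LIMSEQ_inverse_real_of_nat)
      ultimately show "?A z \<le> c" using LIMSEQ_le_const by fastforce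
    qed
  qed
  ultimately show ?thesis by blast
qed

lemma measurable_Lambda_max_le:
  assumes "k \<in> {2, 3}" "finite T" "T \<noteq> {}" "\<And>i. i < n \<Longrightarrow> (\<lambda>\<omega>. W \<omega> i) \<in> borel_measurable M"
  shows "{\<omega> \<in> space M. Lambda_max T (tensor_form n (W \<omega>) x k T) \<le> c} \<in> sets M"
proof -
  obtain D where D: "countable D" "D \<noteq> {}"
    "\<forall>n w x c. Lambda_max T (tensor_form n w x k T) \<le> c \<longleftrightarrow> (\<forall>y \<in> D. tensor_form n w x k T y \<le> c)"
    using Lambda_max_le_iff_countable[OF assms(1-3)] by (elim exE conjE)
  have "(\<lambda>\<omega>. tensor_form n (W \<omega>) x k T y) \<in> borel_measurable M" for y
    unfolding tensor_form_def using assms(4) by (intro borel_measurable_sum borel_measurable_times) auto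
  then have "{\<omega> \<in> space M. tensor_form n (W \<omega>) x k T y \<le> c} \<in> sets M" for y
    by (simp add: borel_measurable_iff_le)
  then have "(\<Inter>y\<in>D. {\<omega> \<in> space M. tensor_form n (W \<omega>) x k T y \<le> c}) \<in> sets M"
    using D(1,2) by (intro sets.countable_INT') auto
  also have "(\<Inter>y\<in>D. {\<omega> \<in> space M. tensor_form n (W \<omega>) x k T y \<le> c})
      = {\<omega> \<in> space M. Lambda_max T (tensor_form n (W \<omega>) x k T) \<le> c}"
    using D(2,3) by blast
  finally show ?thesis .
qed

section \<open>The deviation bound\<close>

lemma threshold_scaling:
  fixes \<gamma> u t L V M :: real
  assumes "1 \<le> \<gamma>" "\<gamma>\<^sup>2 * u \<le> t * L" "0 \<le> V" "0 \<le> u" "0 \<le> M"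
  shows "\<gamma> * (2 * sqrt (V * u) + 2 * M * u) \<le> 2 * (sqrt (t * V * L) + t * M * L)"
proof -
  have "\<gamma> * sqrt (V * u) = sqrt (V * (\<gamma>\<^sup>2 * u))"
    using assms(1,3,4) by (simp add: real_sqrt_mult)
  also have "\<dots> \<le> sqrt (V * (t * L))"
    using assms(2,3) by (intro real_sqrt_le_mono mult_left_mono)
  also have "\<dots> = sqrt (t * V * L)" by (simp add: mult_ac)
  finally have "\<gamma> * sqrt (V * u) \<le> sqrt (t * V * L)" .
  moreover have "\<gamma> * u \<le> \<gamma>\<^sup>2 * u"
    using assms(1,4) by (intro mult_right_mono) (auto simp: power2_eq_square)
  then have "\<gamma> * (M * u) \<le> t * M * L"
    using assms(2,5) mult_left_mono[of "\<gamma> * u" "t * L" M] by (simp add: mult_ac)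
  ultimately show ?thesis by (simp add: algebra_simps)
qed

lemma gauss_weighted_chi2_union_tail:
  fixes a :: "'a \<Rightarrow> nat \<Rightarrow> real" and V c K \<delta> :: real
  assumes "finite N" "real (card N) \<le> K" "1 \<le> K" "0 < \<delta>" "\<delta> < 1"
    and "\<And>y. y \<in> N \<Longrightarrow> (\<Sum>i<n. (a y i)\<^sup>2) \<le> V" "\<And>y i. y \<in> N \<Longrightarrow> i < n \<Longrightarrow> \<bar>a y i\<bar> \<le> c" "0 \<le> c"
  defines "u \<equiv> ln (2 * K / \<delta>)"
  shows "measure (gauss_measure n) (\<Union>y\<in>N. {\<omega> \<in> space (gauss_measure n).
            2 * sqrt (V * u) + 2 * c * u < \<bar>\<Sum>i<n. a y i * ((\<omega> i)\<^sup>2 - 1)\<bar>}) \<le> \<delta>"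
proof -
  have "0 < u" "exp (- u) = \<delta> / (2 * K)"
    using assms(3-5) by (simp_all add: u_def exp_minus divide_simps)
  have "measure (gauss_measure n) (\<Union>y\<in>N. {\<omega> \<in> space (gauss_measure n).
            2 * sqrt (V * u) + 2 * c * u < \<bar>\<Sum>i<n. a y i * ((\<omega> i)\<^sup>2 - 1)\<bar>})
      \<le> (\<Sum>y\<in>N. measure (gauss_measure n) {\<omega> \<in> space (gauss_measure n).
            2 * sqrt (V * u) + 2 * c * u < \<bar>\<Sum>i<n. a y i * ((\<omega> i)\<^sup>2 - 1)\<bar>})"
    using assms(1) by (intro measure_UNION_le) measurable
  also have "\<dots> \<le> (\<Sum>y\<in>N. 2 * exp (- u))"
    using assms(6-8) \<open>0 < u\<close> by (intro sum_mono gauss_weighted_chi2_abs_tail) auto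
  also have "\<dots> = real (card N) * (2 * exp (- u))" by simp
  also have "\<dots> \<le> K * (2 * exp (- u))" using assms(2) by (intro mult_right_mono) auto
  also have "\<dots> = \<delta>" using assms(3) \<open>exp (- u) = \<delta> / (2 * K)\<close> by simp
  finally show ?thesis .
qed

lemma tensor_deviation_bound:
  fixes x :: "nat \<Rightarrow> nat \<Rightarrow> real"
  assumes "k \<in> {2, 3}" "0 < n" "finite T" "T \<noteq> {}" "0 < \<delta>" "\<delta> < 1"
    and "finite N" "N \<subseteq> unit_sphere_T T" "real (card N) \<le> K" "1 \<le> K"
    and "1 \<le> \<gamma>" "\<gamma>\<^sup>2 * ln (2 * K / \<delta>) \<le> real (card T) * L"
    and norming: "\<And>w B. (\<forall>y \<in> N. \<bar>tensor_form n w x k T y\<bar> \<le> B) \<Longrightarrow>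
                   Lambda_abs T (tensor_form n w x k T) \<le> \<gamma> * B"
  defines "\<Lambda> \<equiv> Lambda_max T (tensor_form n (\<lambda>_. 1 / real n) x (2 * k) T)"
    and "M \<equiv> MAX i \<in> {..<n}. norm_T T (x i) ^ k"
  shows "1 - \<delta> \<le> measure (gauss_measure n)
    {\<omega> \<in> space (gauss_measure n). Lambda_max T (tensor_form n (\<lambda>i. ((\<omega> i)\<^sup>2 - 1) / real n) x k T)
       \<le> (2 / real n) * (sqrt (real (card T) * real n * \<Lambda> * L) + real (card T) * M * L)}"
    (is "_ \<le> measure _ ?good")
proof -
  interpret prob_space "gauss_measure n" by (rule prob_space_gauss_measure)
  let ?S = "unit_sphere_T T" and ?\<Omega> = "space (gauss_measure n)"
  let ?chi = "\<lambda>y \<omega>. \<Sum>i<n. ip_T T (x i) y ^ k * ((\<omega> i)\<^sup>2 - 1)"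
  define V where "V = real n * \<Lambda>"
  define u where "u = ln (2 * K / \<delta>)"
  define thr where "thr = 2 * sqrt (V * u) + 2 * M * u"
  define bad where "bad = (\<Union>y\<in>N. {\<omega> \<in> ?\<Omega>. thr < \<bar>?chi y \<omega>\<bar>})"
  have variance: "(\<Sum>i<n. (ip_T T (x i) y ^ k)\<^sup>2) \<le> V" if "y \<in> ?S" for y
  proof -
    have "tensor_form n (\<lambda>_. 1 / real n) x (2 * k) T y \<le> \<Lambda>"
      unfolding \<Lambda>_def by (rule tensor_form_le_Lambda_max[OF that])
    then have "(1 / real n) * (\<Sum>i<n. ip_T T (x i) y ^ (2 * k)) \<le> \<Lambda>"
      by (simp add: tensor_form_def sum_distrib_left)
    then show ?thesis using assms(2) by (simp add: V_def field_simps power_mult[symmetric] mult.commute)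
  qed
  have range: "\<bar>ip_T T (x i) y ^ k\<bar> \<le> M" if "y \<in> ?S" "i < n" for y i
  proof -
    have "\<bar>ip_T T (x i) y\<bar> \<le> norm_T T (x i)"
      using abs_ip_T_le[of T "x i" y] that(1) by (simp add: unit_sphere_T_def)
    then have "\<bar>ip_T T (x i) y ^ k\<bar> \<le> norm_T T (x i) ^ k" by (simp add: power_abs power_mono)
    also have "\<dots> \<le> M" unfolding M_def using that(2) by (intro Max_ge) auto
    finally show ?thesis .
  qed
  obtain y where y: "y \<in> ?S" using unit_sphere_T_nonempty[OF assms(3,4)] by blast
  have "0 \<le> V" by (rule order_trans[OF sum_nonneg variance[OF y]]) simp
  have "0 \<le> M" using range[OF y assms(2)] by (meson abs_ge_zero order_trans)
  have "1 < 2 * K / \<delta>" using assms(5,6,10) by (simp add: field_simps)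
  then have "0 < u" by (simp add: u_def)
  have bad_small: "measure (gauss_measure n) bad \<le> \<delta>"
    unfolding bad_def thr_def u_def
    using assms(5-10) variance range \<open>0 \<le> M\<close> by (intro gauss_weighted_chi2_union_tail) auto
  have "bad \<in> events" unfolding bad_def by (intro sets.finite_UN assms(7)) measurable
  have "?good \<in> events" by (intro measurable_Lambda_max_le assms(1,3,4)) simp
  have "?\<Omega> - bad \<subseteq> ?good"
  proof
    fix \<omega> assume "\<omega> \<in> ?\<Omega> - bad"
    then have \<omega>: "\<omega> \<in> ?\<Omega>" "\<omega> \<notin> bad" by auto
    have "\<forall>y \<in> N. \<bar>tensor_form n (\<lambda>i. ((\<omega> i)\<^sup>2 - 1) / real n) x k T y\<bar> \<le> thr / real n"
      using \<omega> assms(2)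
      by (auto simp: bad_def tensor_form_def sum_divide_distrib[symmetric] mult.commute divide_right_mono)
    then have "Lambda_max T (tensor_form n (\<lambda>i. ((\<omega> i)\<^sup>2 - 1) / real n) x k T) \<le> \<gamma> * (thr / real n)"
      using norming Lambda_max_le_Lambda_abs[OF assms(3,4)] order_trans by blast
    also have "\<dots> \<le> (2 / real n) * (sqrt (real (card T) * V * L) + real (card T) * M * L)"
      using threshold_scaling[OF assms(11) _ \<open>0 \<le> V\<close> _ \<open>0 \<le> M\<close>, of u "real (card T)" L]
        assms(2,12) \<open>0 < u\<close> unfolding thr_def u_def by (simp add: divide_right_mono)
    finally show "\<omega> \<in> ?good" using \<omega>(1) by (simp add: V_def mult_ac)
  qed
  then have "measure (gauss_measure n) (?\<Omega> - bad) \<le> measure (gauss_measure n) ?good"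
    using \<open>?good \<in> events\<close> by (rule finite_measure_mono)
  then show ?thesis using bad_small \<open>bad \<in> events\<close> by (simp add: prob_compl)
qed

lemma ln_net_size_le:
  fixes C \<delta> :: real
  assumes "2 \<le> t" "1 \<le> C" "0 < \<delta>" "\<delta> < 1"
  shows "(4/3)\<^sup>2 * ln (2 * C ^ t / \<delta>) \<le> real t * ln (2 * C\<^sup>2 / \<delta>)"
proof -
  have logs: "0 \<le> ln C" "0 \<le> ln (2::real)" "ln \<delta> < 0" "0 \<le> real t * ln C" using assms by simp_all
  have size: "ln (2 * C ^ t / \<delta>) = ln 2 + real t * ln C - ln \<delta>"
    using assms by (simp add: ln_div ln_mult ln_realpow)
  have "0 \<le> ln (2 * C ^ t / \<delta>)" unfolding size using logs by linarith
  then have "(4/3)\<^sup>2 * ln (2 * C ^ t / \<delta>) \<le> 2 * ln (2 * C ^ t / \<delta>)"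
    by (intro mult_right_mono) (auto simp: power2_eq_square)
  also have "\<dots> \<le> real t * ln (2 * C\<^sup>2 / \<delta>)"
  proof -
    have "2 * ln 2 \<le> real t * ln (2::real)" "- (2 * ln \<delta>) \<le> - (real t * ln \<delta>)"
      using assms(1) logs by (auto intro: mult_right_mono mult_right_mono_neg)
    moreover have "real t * ln (2 * C\<^sup>2 / \<delta>) = real t * ln 2 + 2 * (real t * ln C) - real t * ln \<delta>"
      using assms by (simp add: ln_div ln_mult ln_realpow algebra_simps)
    ultimately show ?thesis unfolding size by argo
  qed
  finally show ?thesis .
qed

text \<open>A \<open>1/54\<close>-net norms with constant \<open>(1 - 27/108)\<^sup>-\<^sup>1 = 4/3\<close>, and \<open>(4/3)\<^sup>2 \<le> 2 \<le> t\<close> absorbs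
  its size \<open>C\<^sup>t\<close> into \<open>t ln (2C\<^sup>2/\<delta>)\<close>. This fails for \<open>t = 1\<close>, but there the sphere \<open>{\<plusminus>1}\<close> is
  itself a net.\<close>

lemma norming_net_exists:
  fixes \<delta> :: real
  assumes "k \<in> {2, 3}" "finite T" "T \<noteq> {}" "0 < \<delta>" "\<delta> < 1"
  defines "C \<equiv> 2 ^ 108 * 3 :: real"
  shows "\<exists>N K \<gamma>. finite N \<and> N \<subseteq> unit_sphere_T T \<and> real (card N) \<le> K \<and> 1 \<le> K \<and> 1 \<le> \<gamma> \<and>
     \<gamma>\<^sup>2 * ln (2 * K / \<delta>) \<le> real (card T) * ln (2 * C\<^sup>2 / \<delta>) \<and>
     (\<forall>n w x B. (\<forall>y \<in> N. \<bar>tensor_form n w x k T y\<bar> \<le> B) \<longrightarrow>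
        Lambda_abs T (tensor_form n w x k T) \<le> \<gamma> * B)"
proof (cases "card T = 1")
  case True
  then obtain j where T: "T = {j}" by (auto simp: card_Suc_eq)
  define N where "N = {(\<lambda>_::nat. 1::real), (\<lambda>_. -1)}"
  have "N \<subseteq> unit_sphere_T T" by (simp add: N_def T unit_sphere_T_def norm_T_def)
  moreover have "real (card N) \<le> 2" by (simp add: N_def card_insert_if)
  moreover have "1\<^sup>2 * ln (2 * 2 / \<delta>) \<le> real (card T) * ln (2 * C\<^sup>2 / \<delta>)"
    using True assms(4) by (simp add: C_def divide_right_mono)
  moreover have "Lambda_abs T (tensor_form n w x k T) \<le> 1 * B"
    if "\<forall>y \<in> N. \<bar>tensor_form n w x k T y\<bar> \<le> B" for n w x B
  proof (rule Lambda_abs_le[OF assms(2,3)], simp)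
    fix z assume "z \<in> unit_sphere_T T"
    then have "z j = 1 \<or> z j = -1" by (auto simp: T unit_sphere_T_def norm_T_def abs_if split: if_splits)
    then obtain y where "y \<in> N" "\<And>i. i \<in> T \<Longrightarrow> z i = y i" by (auto simp: N_def T)
    then show "\<bar>tensor_form n w x k T z\<bar> \<le> B"
      using that ip_T_cong[of T z y] by (simp add: tensor_form_def)
  qed
  ultimately show ?thesis by (intro exI[of _ N] exI[of _ 2] exI[of _ 1]) (auto simp: N_def)
next
  case False
  define t where "t = card T"
  have "0 < t" using assms(2,3) by (simp add: t_def card_gt_0_iff)
  with False have "2 \<le> t" by (simp add: t_def)
  obtain N where N: "finite N" "N \<subseteq> unit_sphere_T T" "real (card N) \<le> 2 ^ (108 * t) * 3 ^ t"
    "\<forall>z \<in> unit_sphere_T T. \<exists>y \<in> N. norm_T T (\<lambda>j. z j - y j) \<le> 1 / 54"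
    using unit_sphere_T_net_exists[OF assms(2,3), of "1/54" "108 * t"] by (auto simp: t_def)
  have size: "(2::real) ^ (108 * t) * 3 ^ t = C ^ t"
    by (simp only: C_def power_mult power_mult_distrib)
  have "1 \<le> C" by (simp add: C_def)
  have "Lambda_abs T (tensor_form n w x k T) \<le> 4/3 * B"
    if "\<forall>y \<in> N. \<bar>tensor_form n w x k T y\<bar> \<le> B" for n w x B
    using Lambda_abs_le_of_net[OF assms(1-3) N(2,4) that] by simp
  then show ?thesis
    using N(1-3) ln_net_size_le[OF \<open>2 \<le> t\<close> \<open>1 \<le> C\<close> assms(4,5)] \<open>1 \<le> C\<close> unfolding size
    by (intro exI[of _ N] exI[of _ "C ^ t"] exI[of _ "4/3"]) (auto simp: t_def)
qed

lemma centred_weights_tensor_form: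
  "(\<lambda>z. (1 / real n) * (\<Sum>i<n. (\<omega> i)\<^sup>2 * ip_T T (x i) z ^ k) - (1 / real n) * (\<Sum>i<n. ip_T T (x i) z ^ k))
     = tensor_form n (\<lambda>i. ((\<omega> i)\<^sup>2 - 1) / real n) x k T"
  by (auto simp: tensor_form_def sum_distrib_left sum_subtractf[symmetric] diff_divide_distrib algebra_simps)

lemma empirical_moment_tensor_form:
  "(\<lambda>z. (1 / real n) * (\<Sum>i<n. ip_T T (x i) z ^ m)) = tensor_form n (\<lambda>_. 1 / real n) x m T"
  by (auto simp: tensor_form_def sum_distrib_left)

theorem lemma4:
  fixes k :: nat
  assumes "k \<in> {2, 3}"
  shows "\<exists>\<xi>::real. \<xi> > 0 \<and>
    (\<forall>(n::nat) (p::nat) (x::nat \<Rightarrow> nat \<Rightarrow> real) (T::nat set) (\<delta>::real).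
       n > 0 \<longrightarrow> T \<subseteq> {..<p} \<longrightarrow> T \<noteq> {} \<longrightarrow> 0 < \<delta> \<longrightarrow> \<delta> < 1 \<longrightarrow>
       measure (gauss_measure n)
         {\<omega> \<in> space (gauss_measure n).
            Lambda_max T (\<lambda>z. (1 / real n) * (\<Sum>i<n. (\<omega> i)\<^sup>2 * (ip_T T (x i) z) ^ k)
                               - (1 / real n) * (\<Sum>i<n. (ip_T T (x i) z) ^ k))
            \<le> (2 / real n) *
               (sqrt (real (card T) * real n *
                      Lambda_max T (\<lambda>z. (1 / real n) * (\<Sum>i<n. (ip_T T (x i) z) ^ (2 * k)))
                      * ln (\<xi> / \<delta>))
                + real (card T) * (MAX i \<in> {..<n}. (norm_T T (x i)) ^ k) * ln (\<xi> / \<delta>))}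
       \<ge> 1 - \<delta>)"
proof (intro exI[of _ "2 * (2 ^ 108 * 3) ^ 2"] conjI allI impI, goal_cases)
  case (2 n p x T \<delta>)
  then have "finite T" using finite_subset by blast
  with 2 obtain N K \<gamma> where "finite N" "N \<subseteq> unit_sphere_T T" "real (card N) \<le> K" "1 \<le> K" "1 \<le> \<gamma>"
    "\<gamma>\<^sup>2 * ln (2 * K / \<delta>) \<le> real (card T) * ln (2 * (2 ^ 108 * 3) ^ 2 / \<delta>)"
    "\<And>w B. (\<forall>y \<in> N. \<bar>tensor_form n w x k T y\<bar> \<le> B) \<Longrightarrow> Lambda_abs T (tensor_form n w x k T) \<le> \<gamma> * B"
    using norming_net_exists[OF assms] by metis
  with 2 \<open>finite T\<close> show ?case
    unfolding centred_weights_tensor_form empirical_moment_tensor_form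
    using tensor_deviation_bound[OF assms, of n T \<delta> N K \<gamma>] by simp
qed simp

end
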